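(* Let $T$ be a set (of traits) with a binary relation $\preceq$ on $T$, and for every link $k$ and every $t\in T$ let $t\oplus k\subseteq T$ be a set of traits. Assume that for all $t_i,t_j\in T$ and every link $k$: if $t_i\preceq t_j$ then for every $t\in t_j\oplus k$ there exists $t'\in t_i\oplus k$ with $t'\preceq t$. Fix a link $k$, and for a label $l=(t_a,t_b)\in T\times T$ let $l\oplus e=\{(t,t_b): t\in t_a\oplus k\}$ (appending $k$ to the first route, after which both routes end at the same node). Let $l_i=(t_{i,a},t_{i,b})$ and $l_j=(t_{j,a},t_{j,b})$ be labels. If $l_i\preceq_{\ne} l_j$, then for every $l\in l_j\oplus e$ there exists $l'\in l_i\oplus e$ with $l'\preceq_{=} l$.
   Context: Setting: a network with nodes and links; a route is a sequence of neighboring links, and a trait records the information (cost, resources) needed to set up a connection along a route; $t\oplus k$ is the set of traits derived by appending link $k$ to a route with trait $t$; $\preceq$ means "better than or equal to". A label is a pair $(t_a,t_b)$ of traits of two link-disjoint routes. For labels $l_i=(t_{i,a},t_{i,b})$, $l_j=(t_{j,a},t_{j,b})$ (routes ending at different nodes) define $l_i\preceq_{\ne} l_j$ iff $t_{i,a}\preceq t_{j,a}$ and $t_{i,b}\preceq t_{j,b}$. For labels $l_i=(t_i,t'_i)$, $l_j=(t_j,t'_j)$ whose both routes end at the same node, define the normal comparison $l_i\preceq_n l_j$ iff $t_i\preceq t_j$ and $t'_i\preceq t'_j$; the cross comparison $l_i\preceq_x l_j$ iff $t_i\preceq t'_j$ and $t'_i\preceq t_j$; and $l_i\preceq_= l_j$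 iff $l_i\preceq_n l_j$ or $l_i\preceq_x l_j$. *)

theory Defs
  imports Main
begin

definition label_le_ne :: "('t \<Rightarrow> 't \<Rightarrow> bool) \<Rightarrow> 't \<times> 't \<Rightarrow> 't \<times> 't \<Rightarrow> bool" where
  "label_le_ne le li lj \<longleftrightarrow> le (fst li) (fst lj) \<and> le (snd li) (snd lj)"

definition label_le_n :: "('t \<Rightarrow> 't \<Rightarrow> bool) \<Rightarrow> 't \<times> 't \<Rightarrow> 't \<times> 't \<Rightarrow> bool" where
  "label_le_n le li lj \<longleftrightarrow> le (fst li) (fst lj) \<and> le (snd li) (snd lj)"

definition label_le_x :: "('t \<Rightarrow> 't \<Rightarrow> bool) \<Rightarrow> 't \<times> 't \<Rightarrow> 't \<times> 't \<Rightarrow> bool" where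
  "label_le_x le li lj \<longleftrightarrow> le (fst li) (snd lj) \<and> le (snd li) (fst lj)"

definition label_le_eq :: "('t \<Rightarrow> 't \<Rightarrow> bool) \<Rightarrow> 't \<times> 't \<Rightarrow> 't \<times> 't \<Rightarrow> bool" where
  "label_le_eq le li lj \<longleftrightarrow> label_le_n le li lj \<or> label_le_x le li lj"

definition label_append :: "('t \<Rightarrow> 'k \<Rightarrow> 't set) \<Rightarrow> 't \<times> 't \<Rightarrow> 'k \<Rightarrow> ('t \<times> 't) set" where
  "label_append oplus l k = {(t, snd l) | t. t \<in> oplus (fst l) k}"

end

theory Submission
  imports Defs
begin

text \<open>Appending the link to the first route of both labels keeps first routes matched with
  first routes.\<close>

lemma label_le_eq_if_label_le_n: "label_le_n le l' l \<Longrightarrow> label_le_eq le l' l"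
  by (simp add: label_le_eq_def)

lemma label_append_simulates:
  assumes simulates: "\<forall>t \<in> oplus (fst lj) k. \<exists>t' \<in> oplus (fst li) k. le t' t"
    and snd_le: "le (snd li) (snd lj)"
  shows "\<forall>l \<in> label_append oplus lj k. \<exists>l' \<in> label_append oplus li k. label_le_n le l' l"
proof
  fix l assume "l \<in> label_append oplus lj k"
  then obtain t where l: "l = (t, snd lj)" and t: "t \<in> oplus (fst lj) k"
    by (auto simp: label_append_def)
  obtain t' where t': "t' \<in> oplus (fst li) k" "le t' t"
    using simulates t by blast
  have "(t', snd li) \<in> label_append oplus li k"
    using t' by (auto simp: label_append_def)
  moreover have "label_le_n le (t', snd li) l"
    using t' snd_le l by (simp add: label_le_n_def)
  ultimately show "\<exists>l' \<in> label_append oplus li k. label_le_n le l' l" by blast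
qed

theorem proposition2:
  fixes T :: "'t set" and le :: "'t \<Rightarrow> 't \<Rightarrow> bool"
    and oplus :: "'t \<Rightarrow> 'k \<Rightarrow> 't set"
    and k :: 'k and li lj :: "'t \<times> 't"
  assumes closed: "\<And>t k'. t \<in> T \<Longrightarrow> oplus t k' \<subseteq> T"
    and mono: "\<And>ti tj k' t. ti \<in> T \<Longrightarrow> tj \<in> T \<Longrightarrow> le ti tj \<Longrightarrow> t \<in> oplus tj k' \<Longrightarrow>
                 \<exists>t'\<in>oplus ti k'. le t' t"
    and li: "li \<in> T \<times> T" and lj: "lj \<in> T \<times> T"
    and ne: "label_le_ne le li lj"
  shows "\<forall>l \<in> label_append oplus lj k. \<exists>l' \<in> label_append oplus li k. label_le_eq le l' l"
proof -
  have fst_le: "le (fst li) (fst lj)" and snd_le: "le (snd li) (snd lj)"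
    using ne by (auto simp: label_le_ne_def)
  have "\<forall>t \<in> oplus (fst lj) k. \<exists>t' \<in> oplus (fst li) k. le t' t"
    using mono[of "fst li" "fst lj"] li lj fst_le by auto
  from label_append_simulates[where oplus = oplus and k = k, OF this snd_le] show ?thesis
    using label_le_eq_if_label_le_n by blast
qed

end
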